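(* For $n\ge0$ let $w_n$ be the number obtained by writing $n$ in base $2$ and reading the resulting string of digits in base $3$ (so if $n=\sum_j \epsilon_j2^j$ with $\epsilon_j\in\{0,1\}$, then $w_n=\sum_j\epsilon_j3^j$). If $\alpha$ is irrational, then $\alpha w_n\bmod 1$ is uniformly distributed on $[0,1)$. *)

theory Defs
  imports Complex_Main
begin

text \<open>w n: binary digits of n read in base 3. Since n < 2^n, all binary digits
  of n with index j >= n vanish, so summing over j < n covers all digits.\<close>
definition w :: "nat \<Rightarrow> nat" where
  "w n = (\<Sum>j<n. ((n div 2 ^ j) mod 2) * 3 ^ j)"

definition uniformly_distributed_mod1 :: "(nat \<Rightarrow> real) \<Rightarrow> bool" where
  "uniformly_distributed_mod1 x \<longleftrightarrow>
     (\<forall>a b. 0 \<le> a \<and> a < b \<and> b \<le> 1 \<longrightarrow>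
        (\<lambda>N. real (card {n. n < N \<and> a \<le> frac (x n) \<and> frac (x n) < b}) / real N)
          \<longlonglongrightarrow> b - a)"

end

theory Submission
  imports Defs "HOL-Analysis.Analysis"
begin

text \<open>
  By Weyl's criterion it suffices to show that the averages of \<open>e(\<theta> w\<^sub>n)\<close>, where
  \<open>e(t) = cis (2 \<pi> t)\<close>, tend to 0 for every irrational \<open>\<theta> = h \<alpha>\<close>. Since
  \<open>w (2\<^sup>k m + r) = 3\<^sup>k w m + w r\<close> for \<open>r < 2\<^sup>k\<close>, the sum over a block of \<open>2\<^sup>k\<close>
  consecutive \<open>n\<close> is a unimodular factor times the Riesz product
  \<open>\<Prod>j<k. 1 + e(\<theta> 3\<^sup>j)\<close>, each of whose factors has modulus at most 2. For
  irrational \<open>\<theta>\<close> infinitely many \<open>\<theta> 3\<^sup>j\<close> lie at distance at least 1/8 from the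
  integers (otherwise the distances would eventually triple at every step), and each such
  factor has modulus at most 15/8; hence the normalised product, and with it the averages,
  tend to 0.

  Weyl's criterion is proved by approximating trapezoidal test functions on the circle
  by trigonometric polynomials (Stone-Weierstrass). The mean of a trigonometric polynomial
  equals its average over the \<open>M\<close>-th roots of unity once \<open>M\<close> exceeds its degree, so no
  integration is needed; lower bounds for the frequencies of \<open>[0,a)\<close>, \<open>[a,b)\<close> and
  \<open>[b,1)\<close>, which add up to 1, then also give the upper bound.
\<close>

section \<open>Binary digits read in base 3\<close>

lemma sum_binary_digits_stable:
  fixes n :: nat
  assumes "n < 2 ^ K" "K \<le> K'"
  shows "(\<Sum>j<K'. (n div 2 ^ j mod 2) * 3 ^ j) = (\<Sum>j<K. (n div 2 ^ j mod 2) * (3::nat) ^ j)"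
proof (rule sum.mono_neutral_right)
  have "n div 2 ^ j = 0" if "K \<le> j" for j
    using assms(1) that by (meson div_less less_le_trans one_le_numeral power_increasing)
  then show "\<forall>j\<in>{..<K'} - {..<K}. (n div 2 ^ j mod 2) * 3 ^ j = 0"
    by simp
qed (use assms(2) in auto)

lemma w_eq_sum_digits:
  assumes "n < 2 ^ K"
  shows "w n = (\<Sum>j<K. (n div 2 ^ j mod 2) * 3 ^ j)"
  using sum_binary_digits_stable[OF less_exp max.cobounded1, of n K]
    sum_binary_digits_stable[OF assms max.cobounded2, of n]
  by (simp add: w_def)

lemma w_rec: "w n = n mod 2 + 3 * w (n div 2)"
proof -
  have "n div 2 < 2 ^ n"
    using less_exp[of n] by linarith
  moreover have "n < 2 ^ Suc n"
    using less_exp[of n] by (simp only: power_Suc)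
  ultimately show ?thesis
    by (simp add: w_eq_sum_digits[of n "Suc n"] w_eq_sum_digits[of "n div 2" n]
        sum.lessThan_Suc_shift sum_distrib_left div_mult2_eq mult_ac del: sum.lessThan_Suc)
qed

lemma w_0 [simp]: "w 0 = 0"
  by (simp add: w_def)

lemma w_1 [simp]: "w 1 = 1"
  using w_rec[of 1] by simp

lemma w_shift_add: "r < 2 ^ k \<Longrightarrow> w (2 ^ k * m + r) = 3 ^ k * w m + w r"
proof (induction k arbitrary: r)
  case (Suc k)
  have "w (2 ^ Suc k * m + r) = r mod 2 + 3 * w (2 ^ k * m + r div 2)"
    using w_rec[of "2 * (2 ^ k * m) + r"] by (simp add: mult.assoc)
  also have "\<dots> = 3 ^ Suc k * w m + (r mod 2 + 3 * w (r div 2))"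
    using Suc by simp
  finally show ?case
    by (simp flip: w_rec)
qed simp


section \<open>Riesz products and exponential sums over \<open>w\<close>\<close>

lemma sum_cis_w_block:
  "(\<Sum>n\<in>{m * 2 ^ k..<m * 2 ^ k + 2 ^ k}. cis (2 * pi * \<theta> * w n))
     = cis (2 * pi * \<theta> * 3 ^ k * w m) * (\<Sum>r<2 ^ k. cis (2 * pi * \<theta> * w r))"
proof -
  have "(\<Sum>n\<in>{m * 2 ^ k..<m * 2 ^ k + 2 ^ k}. cis (2 * pi * \<theta> * w n))
      = (\<Sum>r<2 ^ k. cis (2 * pi * \<theta> * w (r + m * 2 ^ k)))"
    using sum.shift_bounds_nat_ivl[of "\<lambda>n. cis (2 * pi * \<theta> * w n)" 0 "m * 2 ^ k" "2 ^ k"]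
    by (simp add: atLeast0LessThan add.commute)
  also have "\<dots> = (\<Sum>r<2 ^ k. cis (2 * pi * \<theta> * 3 ^ k * w m) * cis (2 * pi * \<theta> * w r))"
  proof (intro sum.cong refl)
    fix r :: nat assume "r \<in> {..<2 ^ k}"
    then have "w (r + m * 2 ^ k) = 3 ^ k * w m + w r"
      using w_shift_add[of r k m] by (simp add: add.commute mult.commute)
    then show "cis (2 * pi * \<theta> * w (r + m * 2 ^ k))
        = cis (2 * pi * \<theta> * 3 ^ k * w m) * cis (2 * pi * \<theta> * w r)"
      by (simp add: cis_mult algebra_simps)
  qed
  finally show ?thesis
    by (simp add: sum_distrib_left)
qed

lemma sum_cis_w_pow2_eq_prod:
  "(\<Sum>r<2 ^ k. cis (2 * pi * \<theta> * w r)) = (\<Prod>j<k. 1 + cis (2 * pi * \<theta> * 3 ^ j))"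
proof (induction k)
  case (Suc k)
  have "(\<Sum>r<2 ^ Suc k. cis (2 * pi * \<theta> * w r))
      = (\<Sum>m<2. \<Sum>n\<in>{m * 2 ^ k..<m * 2 ^ k + 2 ^ k}. cis (2 * pi * \<theta> * w n))"
    by (simp add: sum.nat_group mult.commute)
  also have "\<dots> = (\<Sum>m<2. cis (2 * pi * \<theta> * 3 ^ k * w m) * (\<Sum>r<2 ^ k. cis (2 * pi * \<theta> * w r)))"
    by (simp only: sum_cis_w_block)
  also have "\<dots> = (\<Sum>r<2 ^ k. cis (2 * pi * \<theta> * w r)) * (1 + cis (2 * pi * \<theta> * 3 ^ k))"
    using w_1 by (simp add: numeral_2_eq_2 algebra_simps)
  finally show ?case
    by (simp add: Suc.IH)
qed simp

lemma norm_sum_cis_w_le: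
  "norm (\<Sum>n<N. cis (2 * pi * \<theta> * w n))
     \<le> real N * (\<Prod>j<k. norm (1 + cis (2 * pi * \<theta> * 3 ^ j)) / 2) + 2 ^ k"
proof -
  define q where "q = N div 2 ^ k"
  define B where "B = (\<Prod>j<k. 1 + cis (2 * pi * \<theta> * 3 ^ j))"
  have N: "q * 2 ^ k \<le> N" "N - q * 2 ^ k < 2 ^ k"
    unfolding q_def by (simp_all add: minus_div_mult_eq_mod)
  have "(\<Sum>n<q * 2 ^ k. cis (2 * pi * \<theta> * w n)) = (\<Sum>m<q. cis (2 * pi * \<theta> * 3 ^ k * w m) * B)"
    by (simp add: sum.nat_group [symmetric] sum_cis_w_block sum_cis_w_pow2_eq_prod B_def)
  then have full_blocks: "norm (\<Sum>n<q * 2 ^ k. cis (2 * pi * \<theta> * w n)) \<le> real q * norm B"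
    using norm_sum[of "\<lambda>m. cis (2 * pi * \<theta> * 3 ^ k * w m) * B" "{..<q}"]
    by (simp add: norm_mult)
  have "norm (\<Sum>n\<in>{q * 2 ^ k..<N}. cis (2 * pi * \<theta> * w n)) \<le> real (N - q * 2 ^ k)"
    using norm_sum[of "\<lambda>n. cis (2 * pi * \<theta> * w n)" "{q * 2 ^ k..<N}"] by simp
  moreover have "real (N - q * 2 ^ k) < 2 ^ k"
    using N(2) by (metis of_nat_less_iff of_nat_numeral of_nat_power)
  ultimately have rest: "norm (\<Sum>n\<in>{q * 2 ^ k..<N}. cis (2 * pi * \<theta> * w n)) \<le> 2 ^ k"
    by linarith
  have "real q * norm B \<le> real N * (norm B / 2 ^ k)"
    using mult_right_mono[OF of_nat_div_le_of_nat[of N "2 ^ k"] norm_ge_zero[of B]]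
    by (simp add: q_def)
  moreover have "norm B / 2 ^ k = (\<Prod>j<k. norm (1 + cis (2 * pi * \<theta> * 3 ^ j)) / 2)"
    by (simp add: B_def prod_norm prod_dividef)
  moreover have "(\<Sum>n<N. cis (2 * pi * \<theta> * w n))
      = (\<Sum>n<q * 2 ^ k. cis (2 * pi * \<theta> * w n)) + (\<Sum>n\<in>{q * 2 ^ k..<N}. cis (2 * pi * \<theta> * w n))"
    using N(1) by (simp add: sum.atLeastLessThan_concat atLeast0LessThan [symmetric])
  ultimately show ?thesis
    using full_blocks rest norm_triangle_ineq by (smt (verit))
qed

lemma irrational_times_powers_far_from_Ints:
  fixes \<theta> :: real and q :: nat
  assumes irr: "\<theta> \<notin> \<rat>" and q: "2 \<le> q"
  shows "\<exists>j\<ge>J. \<forall>n::int. 1 / (2 * (q + 1)) \<le> \<bar>\<theta> * q ^ j - n\<bar>"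
proof (rule ccontr)
  define \<delta> :: real where "\<delta> = 1 / (2 * (q + 1))"
  assume "\<not> ?thesis"
  then obtain near :: "nat \<Rightarrow> int" where near: "\<And>j. J \<le> j \<Longrightarrow> \<bar>\<theta> * q ^ j - near j\<bar> < \<delta>"
    unfolding \<delta>_def by (metis not_le)
  define d where "d j = \<theta> * q ^ j - near j" for j
  have d_Suc: "d (Suc j) = q * d j" if "J \<le> j" for j
  proof -
    have "\<bar>d j\<bar> < \<delta>" "\<bar>d (Suc j)\<bar> < \<delta>"
      using near[of j] near[of "Suc j"] that by (simp_all add: d_def)
    moreover have "\<bar>q * d j\<bar> < q * \<delta>"
      using \<open>\<bar>d j\<bar> < \<delta>\<close> q by (simp add: abs_mult)
    ultimately have "\<bar>q * d j - d (Suc j)\<bar> < q * \<delta> + \<delta>"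
      using abs_triangle_ineq4[of "q * d j" "d (Suc j)"] by linarith
    also have "q * \<delta> + \<delta> = 1 / 2"
      by (simp add: \<delta>_def field_simps)
    finally have "\<bar>of_int (near (Suc j) - q * near j)\<bar> < (1::real)"
      by (simp add: d_def algebra_simps)
    then have "near (Suc j) = q * near j"
      by linarith
    then show ?thesis
      by (simp add: d_def algebra_simps)
  qed
  have d_pow: "d (J + i) = q ^ i * d J" for i
    by (induction i) (simp_all add: d_Suc)
  have "d J \<noteq> 0"
  proof
    assume "d J = 0"
    then have "\<theta> = of_int (near J) / of_nat (q ^ J)"
      using q by (simp add: d_def field_simps)
    with irr show False
      by simp
  qed
  then obtain i where "\<delta> / \<bar>d J\<bar> < q ^ i"
    using real_arch_pow[of q "\<delta> / \<bar>d J\<bar>"] q by auto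
  then have "\<delta> < \<bar>d (J + i)\<bar>"
    using \<open>d J \<noteq> 0\<close> by (simp add: d_pow abs_mult field_simps)
  with near[of "J + i"] show False
    by (simp add: d_def)
qed

lemma cos_2pi_le_if_far_from_Ints:
  fixes x :: real
  assumes "\<And>n::int. 1 / 8 \<le> \<bar>x - n\<bar>"
  shows "cos (2 * pi * x) \<le> 3 / 4"
proof -
  define t where "t = x - \<lfloor>x\<rfloor>"
  have t: "1 / 8 \<le> t" "t \<le> 7 / 8"
    using assms[of "\<lfloor>x\<rfloor>"] assms[of "\<lfloor>x\<rfloor> + 1"] by (simp_all add: t_def)
  have "cos (2 * pi * x) = cos (2 * pi * t + 2 * pi * \<lfloor>x\<rfloor>)"
    by (simp add: t_def algebra_simps)
  also have "\<dots> = cos (2 * pi * t)"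
    by (simp add: cos_add)
  also have "\<dots> \<le> cos (pi / 4)"
  proof (cases "t \<le> 1 / 2")
    case True
    then show ?thesis
      using t by (intro cos_monotone_0_pi_le) (auto simp: field_simps)
  next
    case False
    have "cos (2 * pi * t) = cos (2 * pi - 2 * pi * t)"
      by (simp add: cos_diff)
    also have "\<dots> \<le> cos (pi / 4)"
      using t False by (intro cos_monotone_0_pi_le) (auto simp: field_simps)
    finally show ?thesis .
  qed
  also have "\<dots> \<le> 3 / 4"
  proof -
    have "sqrt 2 \<le> 3 / 2"
      by (rule real_le_lsqrt) (auto simp: power2_eq_square)
    then show ?thesis
      by (simp add: cos_45)
  qed
  finally show ?thesis .
qed

lemma norm_one_plus_cis_squared: "(norm (1 + cis y))\<^sup>2 = 2 + 2 * cos y"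
proof -
  have "(norm (1 + cis y))\<^sup>2 = (1 + cos y)\<^sup>2 + (sin y)\<^sup>2"
    by (simp add: cmod_power2)
  then show ?thesis
    using sin_cos_squared_add[of y] by (simp add: power2_eq_square algebra_simps)
qed

lemma norm_one_plus_cis_le:
  fixes x :: real
  assumes "\<And>n::int. 1 / 8 \<le> \<bar>x - n\<bar>"
  shows "norm (1 + cis (2 * pi * x)) \<le> 15 / 8"
proof -
  have "(norm (1 + cis (2 * pi * x)))\<^sup>2 = 2 + 2 * cos (2 * pi * x)"
    by (rule norm_one_plus_cis_squared)
  also have "\<dots> \<le> (15 / 8)\<^sup>2"
    using cos_2pi_le_if_far_from_Ints[OF assms] by (simp add: power2_eq_square)
  finally show ?thesis
    by (rule power2_le_imp_le) simp
qed

lemma prod_lessThan_small: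
  fixes a :: "nat \<Rightarrow> real"
  assumes a: "\<And>j. 0 \<le> a j" "\<And>j. a j \<le> 1"
    and often: "\<And>J. \<exists>j\<ge>J. a j \<le> c" and "c < 1" "0 < \<epsilon>"
  shows "\<exists>k. (\<Prod>j<k. a j) < \<epsilon>"
proof -
  have antimono: "(\<Prod>j<k'. a j) \<le> (\<Prod>j<k. a j)" if "k \<le> k'" for k k'
    using that
  proof (induction k' rule: dec_induct)
    case (step k')
    then show ?case
      using a mult_left_mono[of "a k'" 1 "\<Prod>j<k'. a j"] by (simp add: prod_nonneg order_trans)
  qed simp
  have "0 \<le> c"
    using often a(1) order_trans by blast
  have "\<exists>k. (\<Prod>j<k. a j) \<le> c ^ m" for m
  proof (induction m)
    case (Suc m)
    then obtain k where k: "(\<Prod>j<k. a j) \<le> c ^ m"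
      by blast
    obtain j where j: "k \<le> j" "a j \<le> c"
      using often by blast
    have "(\<Prod>j<Suc j. a j) = (\<Prod>j<j. a j) * a j"
      by simp
    also have "\<dots> \<le> c ^ m * c"
      using antimono[OF j(1)] k j(2) a \<open>0 \<le> c\<close> by (intro mult_mono) (auto intro: prod_nonneg order_trans)
    finally have "(\<Prod>j<Suc j. a j) \<le> c ^ Suc m"
      by (simp add: mult.commute)
    then show ?case ..
  qed (auto intro: exI[of _ 0])
  moreover obtain m where "c ^ m < \<epsilon>"
    using real_arch_pow_inv[of \<epsilon> c] \<open>c < 1\<close> \<open>0 < \<epsilon>\<close> by blast
  ultimately show ?thesis
    by (meson le_less_trans)
qed

lemma sum_cis_w_average_tendsto_zero:
  fixes \<theta> :: real
  assumes "\<theta> \<notin> \<rat>"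
  shows "(\<lambda>N. (\<Sum>n<N. cis (2 * pi * \<theta> * w n)) / of_nat N) \<longlonglongrightarrow> 0"
proof (rule LIMSEQ_I)
  fix r :: real
  assume "0 < r"
  define a where "a j = norm (1 + cis (2 * pi * \<theta> * 3 ^ j)) / 2" for j
  have "\<exists>j\<ge>J. a j \<le> 15 / 16" for J
  proof -
    obtain j where "j \<ge> J" "\<forall>n::int. 1 / 8 \<le> \<bar>\<theta> * 3 ^ j - n\<bar>"
      using irrational_times_powers_far_from_Ints[OF assms, of 3 J] by auto
    then show ?thesis
      using norm_one_plus_cis_le[of "\<theta> * 3 ^ j"] by (auto simp: a_def mult.assoc)
  qed
  moreover have "a j \<le> 1" for j
    using norm_triangle_ineq[of 1 "cis (2 * pi * \<theta> * 3 ^ j)"] by (simp add: a_def)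
  ultimately obtain k where k: "(\<Prod>j<k. a j) < r / 2"
    using prod_lessThan_small[of a "15 / 16" "r / 2"] \<open>0 < r\<close> by (auto simp: a_def)
  obtain N0 :: nat where N0: "2 * 2 ^ k / r < N0"
    using reals_Archimedean2 by blast
  have "norm ((\<Sum>n<N. cis (2 * pi * \<theta> * w n)) / of_nat N) < r" if "N0 \<le> N" for N
  proof -
    have "0 < 2 * 2 ^ k / r" "2 * 2 ^ k / r < N"
      using N0 that \<open>0 < r\<close> by auto
    then have N: "0 < real N"
      by linarith
    with \<open>2 * 2 ^ k / r < N\<close> \<open>0 < r\<close> have "2 ^ k / real N < r / 2"
      by (simp add: field_simps)
    have "norm ((\<Sum>n<N. cis (2 * pi * \<theta> * w n)) / of_nat N)
        \<le> (real N * (\<Prod>j<k. a j) + 2 ^ k) / real N"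
      using norm_sum_cis_w_le[of \<theta> N k] by (simp add: norm_divide a_def divide_right_mono)
    also have "\<dots> = (\<Prod>j<k. a j) + 2 ^ k / real N"
      using N by (simp add: field_simps)
    finally show ?thesis
      using k \<open>2 ^ k / real N < r / 2\<close> by linarith
  qed
  then show "\<exists>N0. \<forall>N\<ge>N0. norm ((\<Sum>n<N. cis (2 * pi * \<theta> * w n)) / of_nat N - 0) < r"
    by auto
qed


section \<open>Trigonometric polynomials on the unit circle\<close>

text \<open>A trigonometric polynomial \<open>\<Sum> c z\<^sup>h\<close> on the unit circle, given by its list of
  coefficient-frequency pairs \<open>(c, h)\<close>; frequencies may repeat, so sums and products
  need no normalisation.\<close>

type_synonym trig_poly = "(complex \<times> int) list"

definition trig_eval :: "trig_poly \<Rightarrow> complex \<Rightarrow> complex" where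
  "trig_eval p z = (\<Sum>(c, h)\<leftarrow>p. c * z powi h)"

definition trig_mean :: "trig_poly \<Rightarrow> complex" where
  "trig_mean p = (\<Sum>(c, h)\<leftarrow>p. if h = 0 then c else 0)"

definition trig_mult :: "trig_poly \<Rightarrow> trig_poly \<Rightarrow> trig_poly" where
  "trig_mult p q = [(c * d, h + k). (c, h) \<leftarrow> p, (d, k) \<leftarrow> q]"

definition trig_cnj :: "trig_poly \<Rightarrow> trig_poly" where
  "trig_cnj p = map (\<lambda>(c, h). (cnj c, - h)) p"

lemma trig_eval_append [simp]: "trig_eval (p @ q) z = trig_eval p z + trig_eval q z"
  by (simp add: trig_eval_def)

lemma trig_eval_mult:
  assumes "z \<noteq> 0"
  shows "trig_eval (trig_mult p q) z = trig_eval p z * trig_eval q z"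
proof (induction p)
  case (Cons a p)
  obtain c h where a: "a = (c, h)"
    by fastforce
  have "trig_eval (map (\<lambda>(d, k). (c * d, h + k)) q) z = c * z powi h * trig_eval q z"
    by (induction q) (auto simp: trig_eval_def power_int_add assms algebra_simps)
  moreover have "trig_mult (a # p) q = map (\<lambda>(d, k). (c * d, h + k)) q @ trig_mult p q"
    by (simp add: trig_mult_def a)
  ultimately show ?case
    using Cons by (simp add: a trig_eval_def algebra_simps)
qed (simp add: trig_eval_def trig_mult_def)

lemma trig_eval_cnj:
  assumes "norm z = 1"
  shows "trig_eval (trig_cnj p) z = cnj (trig_eval p z)"
proof -
  have "z * cnj z = 1"
    using assms complex_norm_square[of z] by simp
  then have "cnj z = inverse z"
    by (metis inverse_unique)
  then show ?thesis
    by (induction p) (auto simp: trig_eval_def trig_cnj_def complex_cnj_power_int power_int_minus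
        power_int_inverse)
qed

lemma continuous_on_trig_eval: "0 \<notin> S \<Longrightarrow> continuous_on S (trig_eval p)"
  unfolding trig_eval_def
  by (induction p) (simp_all add: case_prod_beta, intro continuous_intros, auto)

lemma Re_trig_eval_mult_Re:
  assumes "norm z = 1"
  shows "Re (trig_eval p z) * Re (trig_eval q z)
    = Re (trig_eval (trig_mult [(1 / 2, 0)] (trig_mult p q @ trig_mult p (trig_cnj q))) z)"
proof -
  have "Re X * Re Y = Re ((X * Y + X * cnj Y) / 2)" for X Y :: complex
    by (simp add: algebra_simps)
  moreover have "z \<noteq> 0"
    using assms by auto
  ultimately show ?thesis
    using assms by (simp add: trig_eval_mult trig_eval_cnj) (simp add: trig_eval_def)
qed

lemma real_trig_poly_approx:
  fixes f :: "complex \<Rightarrow> real"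
  assumes f: "continuous_on (sphere 0 1) f" and "0 < e"
  shows "\<exists>p. \<forall>z\<in>sphere 0 1. \<bar>f z - Re (trig_eval p z)\<bar> < e"
proof -
  define S :: "complex set" where "S = sphere 0 1"
  define real_trig where "real_trig g \<longleftrightarrow> (\<exists>p. \<forall>z\<in>S. g z = Re (trig_eval p z))"
    for g :: "complex \<Rightarrow> real"
  have "0 \<notin> S"
    by (simp add: S_def)
  have "\<exists>g. real_trig g \<and> (\<forall>z\<in>S. \<bar>f z - g z\<bar> < e)"
  proof (rule Stone_Weierstrass_HOL)
    show "real_trig (\<lambda>_. c)" for c
      by (auto simp: real_trig_def trig_eval_def intro: exI[of _ "[(of_real c, 0)]"])
    show "continuous_on S g" if "real_trig g" for g
      using that continuous_on_trig_eval[OF \<open>0 \<notin> S\<close>]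
      by (auto simp: real_trig_def intro: continuous_on_cong[THEN iffD1, OF refl _ continuous_on_Re])
    show "real_trig (\<lambda>z. g1 z + g2 z)" if "real_trig g1 \<and> real_trig g2" for g1 g2
      using that unfolding real_trig_def by (metis plus_complex.sel(1) trig_eval_append)
    show "real_trig (\<lambda>z. g1 z * g2 z)" if "real_trig g1 \<and> real_trig g2" for g1 g2
      using that Re_trig_eval_mult_Re unfolding real_trig_def S_def by (metis mem_sphere_0)
    show "\<exists>g. real_trig g \<and> g z \<noteq> g z'" if "z \<in> S \<and> z' \<in> S \<and> z \<noteq> z'" for z z'
    proof -
      have "real_trig Re" "real_trig Im"
        unfolding real_trig_def trig_eval_def
        by (auto intro: exI[of _ "[(1, 1)]"] exI[of _ "[(-\<i>, 1)]"])
      then show ?thesis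
        using that complex_eqI by blast
    qed
  qed (use f \<open>0 < e\<close> in \<open>simp_all add: S_def\<close>)
  then show ?thesis
    unfolding real_trig_def S_def by (metis (no_types, lifting))
qed

lemma sum_roots_unity_power_int:
  fixes M :: nat and h :: int
  assumes "h \<noteq> 0" "\<bar>h\<bar> < M"
  shows "(\<Sum>m<M. cis (2 * pi * m / M) powi h) = 0"
proof -
  define \<omega> where "\<omega> = cis (2 * pi * h / M)"
  have "M > 0"
    using assms by linarith
  have "cis (2 * pi * m / M) powi h = \<omega> ^ m" for m
    by (simp add: \<omega>_def cis_power_int Complex.DeMoivre field_simps)
  moreover have "\<omega> ^ M = 1"
    using \<open>M > 0\<close> by (simp add: \<omega>_def Complex.DeMoivre cis_multiple_2pi)
  moreover have "\<omega> \<noteq> 1"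
  proof
    assume "\<omega> = 1"
    then obtain n :: int where "2 * pi * h / M = n * 2 * pi"
      by (auto simp: \<omega>_def complex_eq_iff cos_one_2pi_int)
    then have "real_of_int h = real_of_int (n * M)"
      using \<open>M > 0\<close> by (simp add: field_simps)
    then have "h = n * M"
      by (simp only: of_int_eq_iff)
    with assms show False
      by (cases "n = 0") (auto simp: abs_mult)
  qed
  ultimately show ?thesis
    by (simp add: sum_gp_strict)
qed

lemma trig_mean_eq_average_roots_unity:
  fixes M :: nat
  assumes "0 < M" "\<forall>(c, h)\<in>set p. \<bar>h\<bar> < M"
  shows "(\<Sum>m<M. trig_eval p (cis (2 * pi * m / M))) / M = trig_mean p"
  using assms(2)
proof (induction p)
  case (Cons a p)
  obtain c h where a: "a = (c, h)"
    by fastforce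
  have "(\<Sum>m<M. cis (2 * pi * m / M) powi h) = (if h = 0 then of_nat M else 0)"
    using sum_roots_unity_power_int[of h M] Cons.prems by (auto simp: a)
  then have "(\<Sum>m<M. trig_eval [a] (cis (2 * pi * m / M))) / M = trig_mean [a]"
    using assms(1) by (simp add: a trig_eval_def trig_mean_def flip: sum_distrib_left)
  moreover have "trig_eval (a # p) z = trig_eval [a] z + trig_eval p z" for z
    by (simp add: trig_eval_def)
  moreover have "trig_mean (a # p) = trig_mean [a] + trig_mean p"
    by (simp add: trig_mean_def)
  ultimately show ?case
    using Cons by (simp add: sum.distrib add_divide_distrib)
qed (simp add: trig_eval_def trig_mean_def)

lemma trig_eval_average_tendsto_mean:
  fixes x :: "nat \<Rightarrow> real"
  assumes weyl: "\<And>h::int. h \<noteq> 0 \<Longrightarrow> (\<lambda>N. (\<Sum>n<N. cis (2 * pi * of_int h * x n)) / of_nat N) \<longlonglongrightarrow> 0"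
  shows "(\<lambda>N. (\<Sum>n<N. trig_eval p (cis (2 * pi * x n))) / of_nat N) \<longlonglongrightarrow> trig_mean p"
proof (induction p)
  case (Cons a p)
  obtain c h where a: "a = (c, h)"
    by fastforce
  have "(\<lambda>N. (\<Sum>n<N. cis (2 * pi * h * x n)) / of_nat N) \<longlonglongrightarrow> (if h = 0 then 1 else 0)"
  proof (cases "h = 0")
    case True
    have ev: "\<forall>\<^sub>F N in sequentially. 1 = (\<Sum>n<N. cis (2 * pi * h * x n)) / (of_nat N :: complex)"
      using eventually_gt_at_top[of 0] by eventually_elim (simp add: True)
    show ?thesis
      using Lim_transform_eventually[OF tendsto_const ev] True by simp
  qed (simp add: weyl)
  moreover have "trig_eval (a # p) (cis (2 * pi * t))
      = c * cis (2 * pi * h * t) + trig_eval p (cis (2 * pi * t))" for t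
    by (simp add: a trig_eval_def cis_power_int mult_ac)
  then have "(\<lambda>N. (\<Sum>n<N. trig_eval (a # p) (cis (2 * pi * x n))) / of_nat N)
      = (\<lambda>N. c * ((\<Sum>n<N. cis (2 * pi * h * x n)) / of_nat N)
          + (\<Sum>n<N. trig_eval p (cis (2 * pi * x n))) / of_nat N)"
    by (simp add: sum.distrib sum_distrib_left add_divide_distrib)
  moreover have "trig_mean (a # p) = c * (if h = 0 then 1 else 0) + trig_mean p"
    by (simp add: a trig_mean_def)
  ultimately show ?case
    by (simp only:) (intro tendsto_intros Cons.IH)
qed (simp add: trig_eval_def trig_mean_def)

lemma abs_average_diff_le:
  fixes a b :: "nat \<Rightarrow> real"
  assumes "\<And>i. i < N \<Longrightarrow> \<bar>a i - b i\<bar> \<le> e" "0 < N"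
  shows "\<bar>(\<Sum>i<N. a i) / N - (\<Sum>i<N. b i) / N\<bar> \<le> e"
proof -
  have "\<bar>\<Sum>i<N. a i - b i\<bar> \<le> (\<Sum>i<N. \<bar>a i - b i\<bar>)"
    by (rule sum_abs)
  also have "\<dots> \<le> N * e"
    using sum_mono[of "{..<N}" "\<lambda>i. \<bar>a i - b i\<bar>" "\<lambda>_. e"] assms(1) by simp
  finally show ?thesis
    using assms(2) by (simp add: sum_subtractf field_simps flip: diff_divide_distrib)
qed

text \<open>The average over the \<open>M\<close>-th roots of unity stands in for the integral over the
  circle: the two agree on trigonometric polynomials of degree less than \<open>M\<close>.\<close>

lemma average_ge_grid_average:
  fixes x :: "nat \<Rightarrow> real" and f :: "complex \<Rightarrow> real"
  assumes weyl: "\<And>h::int. h \<noteq> 0 \<Longrightarrow> (\<lambda>N. (\<Sum>n<N. cis (2 * pi * of_int h * x n)) / of_nat N) \<longlonglongrightarrow> 0"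
    and f: "continuous_on (sphere 0 1) f" and "0 < \<delta>"
  shows "\<exists>M0. \<forall>M\<ge>M0. \<forall>\<^sub>F N in sequentially.
           (\<Sum>m<M. f (cis (2 * pi * real m / real M))) / real M - \<delta>
             < (\<Sum>n<N. f (cis (2 * pi * x n))) / N"
proof -
  obtain p where p: "\<forall>z\<in>sphere 0 1. \<bar>f z - Re (trig_eval p z)\<bar> < \<delta> / 3"
    using real_trig_poly_approx[OF f, of "\<delta> / 3"] \<open>0 < \<delta>\<close> by auto
  define g where "g z = Re (trig_eval p z)" for z
  have f_g: "\<bar>f (cis t) - g (cis t)\<bar> \<le> \<delta> / 3" for t
    using p by (simp add: g_def less_imp_le)
  obtain H :: nat where H: "\<forall>h\<in>(\<lambda>h. nat \<bar>h\<bar>) ` snd ` set p. h < H"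
    using finite_nat_set_iff_bounded by blast
  have grid: "(\<Sum>m<M. g (cis (2 * pi * m / M))) / M = Re (trig_mean p)" if "max 1 H \<le> M" for M :: nat
  proof -
    have "\<forall>(c, h)\<in>set p. \<bar>h\<bar> < int M"
      using H that by force
    from arg_cong[OF trig_mean_eq_average_roots_unity[OF _ this], of Re] that show ?thesis
      by (simp add: g_def Re_divide_of_nat)
  qed
  have "(\<lambda>N. (\<Sum>n<N. g (cis (2 * pi * x n))) / N) \<longlonglongrightarrow> Re (trig_mean p)"
    using tendsto_Re[OF trig_eval_average_tendsto_mean[OF weyl, of p]] by (simp add: g_def Re_divide_of_nat)
  then have average: "\<forall>\<^sub>F N in sequentially. Re (trig_mean p) - \<delta> / 3 < (\<Sum>n<N. g (cis (2 * pi * x n))) / N \<and> 0 < N"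
    using \<open>0 < \<delta>\<close> by (intro eventually_conj order_tendstoD(1) eventually_gt_at_top) auto
  show ?thesis
  proof (intro exI allI impI)
    fix M :: nat
    assume M: "max 1 H \<le> M"
    then have "\<bar>(\<Sum>m<M. f (cis (2 * pi * m / M))) / M - (\<Sum>m<M. g (cis (2 * pi * m / M))) / M\<bar> \<le> \<delta> / 3"
      by (intro abs_average_diff_le f_g) auto
    with grid[OF M] have grid_f: "(\<Sum>m<M. f (cis (2 * pi * m / M))) / M \<le> Re (trig_mean p) + \<delta> / 3"
      by linarith
    from average show "\<forall>\<^sub>F N in sequentially. (\<Sum>m<M. f (cis (2 * pi * real m / real M))) / real M - \<delta>
        < (\<Sum>n<N. f (cis (2 * pi * x n))) / N"
    proof eventually_elim
      case (elim N)
      then have "\<bar>(\<Sum>n<N. f (cis (2 * pi * x n))) / N - (\<Sum>n<N. g (cis (2 * pi * x n))) / N\<bar> \<le> \<delta> / 3"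
        by (intro abs_average_diff_le f_g) auto
      with elim grid_f show ?case
        by linarith
    qed
  qed
qed


section \<open>Weyl's criterion\<close>

definition trapezoid :: "real \<Rightarrow> real \<Rightarrow> real \<Rightarrow> real \<Rightarrow> real" where
  "trapezoid a b d t = max 0 (min 1 (min ((t - a) / d) ((b - t) / d)))"

lemma trapezoid_bounds: "0 \<le> trapezoid a b d t" "trapezoid a b d t \<le> 1"
  by (simp_all add: trapezoid_def)

lemma trapezoid_eq_0:
  assumes "0 < d" "t \<le> a \<or> b \<le> t"
  shows "trapezoid a b d t = 0"
proof -
  have "min ((t - a) / d) ((b - t) / d) \<le> 0"
    using assms by (auto simp: min_le_iff_disj divide_nonpos_pos)
  then show ?thesis
    by (simp add: trapezoid_def min_def max_def)
qed

lemma trapezoid_eq_1: "0 < d \<Longrightarrow> a + d \<le> t \<Longrightarrow> t \<le> b - d \<Longrightarrow> trapezoid a b d t = 1"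
  by (auto simp: trapezoid_def min_def max_def field_simps)

lemma continuous_on_trapezoid: "continuous_on S (trapezoid a b d)"
  unfolding trapezoid_def divide_inverse by (intro continuous_intros)

lemma Arg2pi_cis_2pi: "0 \<le> t \<Longrightarrow> t < 1 \<Longrightarrow> Arg2pi (cis (2 * pi * t)) = 2 * pi * t"
  by (rule Arg2pi_unique[of 1]) (auto simp: cis_conv_exp)

lemma Arg2pi_near_1:
  assumes "norm z = 1" "dist z 1 < 1 - cos (2 * pi * d)" "0 \<le> d"
  shows "Arg2pi z < 2 * pi * d \<or> 2 * pi - 2 * pi * d < Arg2pi z"
proof (rule ccontr)
  assume "\<not> ?thesis"
  then have between: "2 * pi * d \<le> Arg2pi z" "Arg2pi z \<le> 2 * pi - 2 * pi * d"
    by auto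
  have "Re z = cos (Arg2pi z)"
    using cos_Arg2pi[of z] assms(1) by auto
  also have "\<dots> \<le> cos (2 * pi * d)"
  proof (cases "Arg2pi z \<le> pi")
    case True
    then show ?thesis
      using between assms(3) by (intro cos_monotone_0_pi_le) auto
  next
    case False
    have "cos (Arg2pi z) = cos (2 * pi - Arg2pi z)"
      by (simp add: cos_diff)
    also have "\<dots> \<le> cos (2 * pi * d)"
      using between False assms(3) by (intro cos_monotone_0_pi_le) auto
    finally show ?thesis .
  qed
  finally have "Re z \<le> cos (2 * pi * d)" .
  moreover have "1 - Re z \<le> dist z 1"
    using abs_Re_le_cmod[of "z - 1"] by (simp add: dist_norm)
  ultimately show False
    using assms(2) by simp
qed

lemma continuous_on_sphere_Arg2pi_comp:
  fixes f :: "real \<Rightarrow> real"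
  assumes f: "continuous_on UNIV f" and d: "0 < d" "d \<le> 1 / 2"
    and vanish: "\<And>t. t < d \<or> 1 - d < t \<Longrightarrow> f t = 0"
  shows "continuous_on (sphere 0 1) (\<lambda>z. f (Arg2pi z / (2 * pi)))"
proof -
  have "continuous (at z within sphere 0 1) (\<lambda>z. f (Arg2pi z / (2 * pi)))" if "z \<in> sphere 0 1" for z
  proof (cases "z \<in> \<real>\<^sub>\<ge>\<^sub>0")
    case False
    have "isCont (\<lambda>z. Arg2pi z / (2 * pi)) z"
      using continuous_at_Arg2pi[OF False] by simp
    moreover have "isCont f (Arg2pi z / (2 * pi))"
      using f by (simp add: continuous_on_eq_continuous_at)
    ultimately have "isCont (\<lambda>z. f (Arg2pi z / (2 * pi))) z"
      by (rule isCont_o2)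
    then show ?thesis
      by (rule continuous_at_imp_continuous_within)
  next
    case True
    then have "Im z = 0" "0 \<le> Re z"
      by (auto simp: complex_nonneg_Reals_iff)
    with that have "z = 1"
      by (simp add: complex_eq_iff cmod_eq_Re)
    have "0 < 1 - cos (2 * pi * d)"
      using cos_monotone_0_pi[of 0 "2 * pi * d"] d by simp
    moreover have "f (Arg2pi y / (2 * pi)) = 0"
      if "y \<in> sphere 0 1" "dist y 1 < 1 - cos (2 * pi * d)" for y
    proof -
      have "Arg2pi y < 2 * pi * d \<or> 2 * pi - 2 * pi * d < Arg2pi y"
        using that d by (intro Arg2pi_near_1) auto
      then show ?thesis
        by (intro vanish) (auto simp: field_simps)
    qed
    ultimately have "((\<lambda>y. f (Arg2pi y / (2 * pi))) \<longlongrightarrow> 0) (at 1 within sphere 0 1)"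
      by (intro Lim_transform_within[OF tendsto_const]) auto
    moreover have "f (Arg2pi 1 / (2 * pi)) = 0"
      using vanish[of 0] d Arg2pi_cis_2pi[of 0] by simp
    ultimately show ?thesis
      by (simp add: \<open>z = 1\<close> continuous_within)
  qed
  then show ?thesis
    using continuous_on_eq_continuous_within by blast
qed

lemma cis_2pi_frac: "cis (2 * pi * frac y) = cis (2 * pi * y)"
proof -
  have "cis (2 * pi * y) = cis (2 * pi * frac y) * cis (2 * pi * of_int \<lfloor>y\<rfloor>)"
    by (simp add: cis_mult frac_def algebra_simps)
  also have "cis (2 * pi * of_int \<lfloor>y\<rfloor>) = 1"
    by (rule cis_multiple_2pi) simp
  finally show ?thesis
    by simp
qed

lemma card_grid_points_ge:
  fixes M :: nat and s t :: real
  assumes "0 \<le> s" "t < 1" "0 < M"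
  shows "M * (t - s) - 1 \<le> card {m. m < M \<and> s \<le> m / M \<and> m / M \<le> t}"
proof (cases "\<lfloor>M * t\<rfloor> < \<lceil>M * s\<rceil>")
  case True
  then have "real_of_int \<lfloor>M * t\<rfloor> + 1 \<le> \<lceil>M * s\<rceil>"
    by linarith
  then have "M * t - M * s - 1 < 0"
    using floor_correct[of "M * t"] ceiling_correct[of "M * s"] by linarith
  then show ?thesis
    by (simp add: right_diff_distrib)
next
  case False
  define lo where "lo = nat \<lceil>M * s\<rceil>"
  define hi where "hi = nat \<lfloor>M * t\<rfloor>"
  have "0 \<le> M * s"
    using assms(1) by simp
  then have "0 \<le> \<lceil>M * s\<rceil>" "0 \<le> \<lfloor>M * t\<rfloor>"
    using False by linarith+
  then have "real lo = \<lceil>M * s\<rceil>" "real hi = \<lfloor>M * t\<rfloor>"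
    by (simp_all add: lo_def hi_def)
  then have lo: "M * s \<le> lo" "lo < M * s + 1" and hi: "hi \<le> M * t" "M * t < hi + 1"
    using floor_correct[of "M * t"] ceiling_correct[of "M * s"] by linarith+
  have "{lo..hi} \<subseteq> {m. m < M \<and> s \<le> m / M \<and> m / M \<le> t}"
  proof
    fix m
    assume "m \<in> {lo..hi}"
    then have "M * s \<le> m" "m \<le> M * t"
      using lo hi by auto
    moreover have "M * t < M"
      using assms by simp
    ultimately have "m < M"
      by (metis le_less_trans of_nat_less_iff)
    with \<open>M * s \<le> m\<close> \<open>m \<le> M * t\<close> show "m \<in> {m. m < M \<and> s \<le> m / M \<and> m / M \<le> t}"
      by (simp add: field_simps)
  qed
  then have "card {lo..hi} \<le> card {m. m < M \<and> s \<le> m / M \<and> m / M \<le> t}"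
    by (intro card_mono) auto
  moreover have "lo \<le> Suc hi"
    unfolding lo_def hi_def using False by (intro le_SucI nat_mono) linarith
  ultimately show ?thesis
    using lo hi by (simp add: of_nat_diff right_diff_distrib)
qed

lemma frac_average_ge_grid_average:
  fixes x :: "nat \<Rightarrow> real" and F :: "real \<Rightarrow> real"
  assumes weyl: "\<And>h::int. h \<noteq> 0 \<Longrightarrow> (\<lambda>N. (\<Sum>n<N. cis (2 * pi * of_int h * x n)) / of_nat N) \<longlonglongrightarrow> 0"
    and F: "continuous_on UNIV F" and d: "0 < d" "d \<le> 1 / 2"
    and vanish: "\<And>t. t < d \<or> 1 - d < t \<Longrightarrow> F t = 0" and "0 < \<delta>"
  shows "\<exists>M0. \<forall>M\<ge>M0. \<forall>\<^sub>F N in sequentially.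
           (\<Sum>m<M. F (real m / real M)) / real M - \<delta> < (\<Sum>n<N. F (frac (x n))) / N"
proof -
  have F_frac: "F (Arg2pi (cis (2 * pi * y)) / (2 * pi)) = F (frac y)" for y
    by (subst cis_2pi_frac [symmetric]) (simp add: Arg2pi_cis_2pi frac_lt_1)
  have F_grid: "(\<Sum>m<M. F (Arg2pi (cis (2 * pi * real m / real M)) / (2 * pi)))
      = (\<Sum>m<M. F (real m / real M))" for M
  proof (intro sum.cong refl)
    fix m
    assume "m \<in> {..<M}"
    then show "F (Arg2pi (cis (2 * pi * real m / real M)) / (2 * pi)) = F (real m / real M)"
      using F_frac[of "real m / real M"] by (simp add: frac_eq)
  qed
  have "\<exists>M0. \<forall>M\<ge>M0. \<forall>\<^sub>F N in sequentially.
      (\<Sum>m<M. F (Arg2pi (cis (2 * pi * real m / real M)) / (2 * pi))) / real M - \<delta>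
        < (\<Sum>n<N. F (Arg2pi (cis (2 * pi * x n)) / (2 * pi))) / N"
    using continuous_on_sphere_Arg2pi_comp[OF F d vanish] \<open>0 < \<delta>\<close>
    by (intro average_ge_grid_average weyl)
  then show ?thesis
    by (simp only: F_frac F_grid)
qed

lemma trapezoid_grid_average_ge:
  fixes M :: nat
  assumes "0 \<le> a" "b \<le> 1" "0 < d" "0 < M"
  shows "b - a - 4 * d - 1 / M \<le> (\<Sum>m<M. trapezoid (a + d) (b - d) d (m / M)) / M"
proof -
  have "M * ((b - 2 * d) - (a + 2 * d)) - 1 \<le> card {m. m < M \<and> a + 2 * d \<le> m / M \<and> m / M \<le> b - 2 * d}"
    using assms by (intro card_grid_points_ge) auto
  also have "\<dots> = (\<Sum>m\<in>{m. m < M \<and> a + 2 * d \<le> m / M \<and> m / M \<le> b - 2 * d}.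
      trapezoid (a + d) (b - d) d (m / M))"
    using assms by (simp add: trapezoid_eq_1)
  also have "\<dots> \<le> (\<Sum>m<M. trapezoid (a + d) (b - d) d (m / M))"
    by (intro sum_mono2) (auto simp: trapezoid_bounds)
  finally have "(M * ((b - 2 * d) - (a + 2 * d)) - 1) / M \<le> (\<Sum>m<M. trapezoid (a + d) (b - d) d (m / M)) / M"
    by (rule divide_right_mono) simp
  then show ?thesis
    using assms by (simp add: diff_divide_distrib)
qed

lemma frac_frequency_ge:
  fixes x :: "nat \<Rightarrow> real"
  assumes weyl: "\<And>h::int. h \<noteq> 0 \<Longrightarrow> (\<lambda>N. (\<Sum>n<N. cis (2 * pi * of_int h * x n)) / of_nat N) \<longlonglongrightarrow> 0"
    and ab: "0 \<le> a" "a \<le> b" "b \<le> 1" and "0 < \<epsilon>"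
  shows "\<forall>\<^sub>F N in sequentially. b - a - \<epsilon> \<le> (\<Sum>n<N. of_bool (a \<le> frac (x n) \<and> frac (x n) < b)) / N"
proof (cases "b - a \<le> \<epsilon>")
  case True
  have "0 \<le> (\<Sum>n<N. of_bool (a \<le> frac (x n) \<and> frac (x n) < b) :: real) / N" for N
    by (simp add: sum_nonneg)
  with True show ?thesis
    by (intro always_eventually allI) (smt (verit))
next
  case False
  define d where "d = \<epsilon> / 6"
  define F where "F = trapezoid (a + d) (b - d) d"
  have d: "0 < d" "d \<le> 1 / 2"
    using False ab \<open>0 < \<epsilon>\<close> by (auto simp: d_def)
  have "\<exists>M0. \<forall>M\<ge>M0. \<forall>\<^sub>F N in sequentially.
      (\<Sum>m<M. F (real m / real M)) / real M - d < (\<Sum>n<N. F (frac (x n))) / N"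
    unfolding F_def using d ab
    by (intro frac_average_ge_grid_average weyl continuous_on_trapezoid) (auto intro: trapezoid_eq_0)
  then obtain M0 where M0: "\<And>M. M0 \<le> M \<Longrightarrow> \<forall>\<^sub>F N in sequentially.
      (\<Sum>m<M. F (real m / real M)) / real M - d < (\<Sum>n<N. F (frac (x n))) / N"
    by blast
  define M where "M = max M0 (nat \<lceil>1 / d\<rceil>)"
  have "1 / d \<le> M"
    by (simp add: M_def) linarith
  moreover have "0 < 1 / d"
    using d by simp
  ultimately have "0 < M"
    by linarith
  with \<open>1 / d \<le> M\<close> d have "1 / M \<le> d"
    by (simp add: field_simps)
  have "F (frac y) \<le> of_bool (a \<le> frac y \<and> frac y < b)" for y
    using d by (auto simp: F_def trapezoid_bounds trapezoid_eq_0)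
  then have indicator: "(\<Sum>n<N. F (frac (x n))) / N
      \<le> (\<Sum>n<N. of_bool (a \<le> frac (x n) \<and> frac (x n) < b)) / N" for N
    by (intro divide_right_mono sum_mono) auto
  have "M0 \<le> M"
    by (simp add: M_def)
  from M0[OF this] show ?thesis
  proof eventually_elim
    case (elim N)
    then show ?case
      using trapezoid_grid_average_ge[of a b d M] ab d \<open>0 < M\<close> \<open>1 / M \<le> d\<close> indicator[of N]
      by (simp add: F_def d_def)
  qed
qed

theorem weyl_criterion:
  fixes x :: "nat \<Rightarrow> real"
  assumes weyl: "\<And>h::int. h \<noteq> 0 \<Longrightarrow> (\<lambda>N. (\<Sum>n<N. cis (2 * pi * of_int h * x n)) / of_nat N) \<longlonglongrightarrow> 0"
  shows "uniformly_distributed_mod1 x"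
  unfolding uniformly_distributed_mod1_def
proof (intro allI impI)
  fix a b :: real
  assume ab: "0 \<le> a \<and> a < b \<and> b \<le> 1"
  define freq where "freq s t N = (\<Sum>n<N. of_bool (s \<le> frac (x n) \<and> frac (x n) < t)) / real N" for s t N
  have card_eq: "real (card {n. n < N \<and> a \<le> frac (x n) \<and> frac (x n) < b}) / N = freq a b N" for N
  proof -
    have "{n. n < N \<and> a \<le> frac (x n) \<and> frac (x n) < b} = {..<N} \<inter> {n. a \<le> frac (x n) \<and> frac (x n) < b}"
      by auto
    then show ?thesis
      by (simp add: freq_def)
  qed
  have partition: "freq 0 a N + freq a b N + freq b 1 N = 1" if "0 < N" for N
  proof -
    have "of_bool (0 \<le> frac (x n) \<and> frac (x n) < a) + of_bool (a \<le> frac (x n) \<and> frac (x n) < b)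
        + of_bool (b \<le> frac (x n) \<and> frac (x n) < 1) = (1::real)" for n
      using ab frac_lt_1[of "x n"] by auto
    then have "(\<Sum>n<N. of_bool (0 \<le> frac (x n) \<and> frac (x n) < a)) + (\<Sum>n<N. of_bool (a \<le> frac (x n) \<and> frac (x n) < b))
        + (\<Sum>n<N. of_bool (b \<le> frac (x n) \<and> frac (x n) < 1)) = (real N)"
      by (simp del: sum_of_bool_eq flip: sum.distrib)
    then show ?thesis
      using that unfolding freq_def by (simp del: sum_of_bool_eq flip: add_divide_distrib)
  qed
  have "\<forall>\<^sub>F N in sequentially. dist (freq a b N) (b - a) < e" if "0 < e" for e
  proof -
    have "\<forall>\<^sub>F N in sequentially. a - 0 - e / 3 \<le> freq 0 a N \<and> b - a - e / 3 \<le> freq a b N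
        \<and> 1 - b - e / 3 \<le> freq b 1 N \<and> 0 < N"
      using ab that unfolding freq_def
      by (intro eventually_conj frac_frequency_ge weyl eventually_gt_at_top) auto
    then show ?thesis
    proof eventually_elim
      case (elim N)
      with partition[of N] that show ?case
        by (auto simp: dist_real_def abs_less_iff)
    qed
  qed
  then show "(\<lambda>N. real (card {n. n < N \<and> a \<le> frac (x n) \<and> frac (x n) < b}) / real N) \<longlonglongrightarrow> b - a"
    unfolding card_eq by (rule tendstoI)
qed

theorem mainTheorem9:
  fixes \<alpha> :: real
  assumes "\<alpha> \<notin> \<rat>"
  shows "uniformly_distributed_mod1 (\<lambda>n. \<alpha> * real (w n))"
proof (rule weyl_criterion)
  fix h :: int
  assume "h \<noteq> 0"
  have "h * \<alpha> \<notin> \<rat>"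
  proof
    assume "h * \<alpha> \<in> \<rat>"
    then have "h * \<alpha> / h \<in> \<rat>"
      by (intro Rats_divide) auto
    with \<open>h \<noteq> 0\<close> assms show False
      by simp
  qed
  then show "(\<lambda>N. (\<Sum>n<N. cis (2 * pi * of_int h * (\<alpha> * w n))) / of_nat N) \<longlonglongrightarrow> 0"
    using sum_cis_w_average_tendsto_zero[of "h * \<alpha>"] by (simp add: mult.assoc)
qed

end
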